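(* Let $\mathcal{M}$ be a countable Scott set coded by $M=\bigoplus_i X_i$ and let $C \subseteq \omega^2$. If $\mathcal{U}^{\mathcal{M}}_C$ is an $\mathcal{M}$-minimal largeness class, then $\mathcal{U}^{\mathcal{M}}_C$ is partition regular.
   Context: A largeness class is a non-empty $\mathcal{A} \subseteq 2^\omega$ closed upward under $\subseteq$ such that for every finite cover $Y_0\cup\dots\cup Y_{k-1}=\omega$ some $Y_j \in \mathcal{A}$. A partition regular class is a largeness class $\mathcal{L}$ such that for every $X\in\mathcal{L}$ and every finite cover $Y_0\cup\dots\cup Y_{k-1}\supseteq X$ some $Y_j \in \mathcal{L}$. A Scott set is a collection of sets closed under Turing reducibility and join such that every infinite binary tree in it has a path in it; it is countable coded by $M$ if it equals $\{X_i : i\in\omega\}$ with $M = \bigoplus_i X_i$. Fix an effective enumeration $\mathcal{U}^Z_0,\mathcal{U}^Z_1,\dots$ (uniform in the oracle $Z$) of all $\Sigma^0_1(Z)$ classes which are upward-closed under $\subseteq$; for $C\subseteq\omega^2$, $\mathcal{U}^{\mathcal{M}}_C = \bigcap_{\langle e,i\rangle\in C}\mathcal{U}^{X_i}_e$. A class $\mathcal{A}$ is $\mathcal{M}$-minimal if for every $X\in\mathcal{M}$ and $e\in\omega$, either $\mathcal{A}\subseteq\mathcal{U}^X_e$ or $\mathcal{A}\cap\mathcal{U}^X_e$ is not a largeness class. *)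

theory Defs
  imports Main "HOL-Library.Nat_Bijection"
begin

datatype recf =
    Zero
  | Succ
  | Proj nat
  | Oracle
  | Comp recf "recf list"
  | Prim recf recf
  | Mn recf

inductive ev :: "nat set \<Rightarrow> recf \<Rightarrow> nat list \<Rightarrow> nat \<Rightarrow> bool" for A :: "nat set" where
  ev_zero: "ev A Zero xs 0"
| ev_succ: "ev A Succ (x # xs) (Suc x)"
| ev_proj: "i < length xs \<Longrightarrow> ev A (Proj i) xs (xs ! i)"
| ev_oracle: "ev A Oracle (x # xs) (if x \<in> A then 1 else 0)"
| ev_comp: "list_all2 (\<lambda>g y. ev A g xs y) gs ys \<Longrightarrow> ev A f ys z \<Longrightarrow> ev A (Comp f gs) xs z"
| ev_prim0: "ev A f xs z \<Longrightarrow> ev A (Prim f g) (0 # xs) z"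
| ev_primS: "ev A (Prim f g) (n # xs) y \<Longrightarrow> ev A g (y # n # xs) z \<Longrightarrow> ev A (Prim f g) (Suc n # xs) z"
| ev_mn: "ev A f (n # xs) 0 \<Longrightarrow> (\<forall>m<n. \<exists>y>0. ev A f (m # xs) y) \<Longrightarrow> ev A (Mn f) xs n"

definition turing_le :: "nat set \<Rightarrow> nat set \<Rightarrow> bool" where
  "turing_le B A \<longleftrightarrow> (\<exists>f. \<forall>n. ev A f [n] (if n \<in> B then 1 else 0))"

definition join :: "nat set \<Rightarrow> nat set \<Rightarrow> nat set" where
  "join A B = {2 * n | n. n \<in> A} \<union> {2 * n + 1 | n. n \<in> B}"

text \<open>Bijective coding of finite binary strings by natural numbers.\<close>
fun bl_code :: "bool list \<Rightarrow> nat" where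
  "bl_code [] = 0"
| "bl_code (b # bs) = 2 * bl_code bs + (if b then 2 else 1)"

definition binary_tree :: "nat set \<Rightarrow> bool" where
  "binary_tree T \<longleftrightarrow> (\<forall>s t. bl_code (s @ t) \<in> T \<longrightarrow> bl_code s \<in> T)"

definition is_path :: "nat set \<Rightarrow> nat set \<Rightarrow> bool" where
  "is_path T P \<longleftrightarrow> (\<forall>k. bl_code (map (\<lambda>n. n \<in> P) [0..<k]) \<in> T)"

definition scott_set :: "nat set set \<Rightarrow> bool" where
  "scott_set S \<longleftrightarrow>
     (\<forall>A\<in>S. \<forall>B. turing_le B A \<longrightarrow> B \<in> S) \<and>
     (\<forall>A\<in>S. \<forall>B\<in>S. join A B \<in> S) \<and>
     (\<forall>T\<in>S. binary_tree T \<and> infinite T \<longrightarrow> (\<exists>P\<in>S. is_path T P))"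

text \<open>Infinite join \<open>M = \<Oplus>_i X_i\<close> (column \<open>i\<close> of \<open>M\<close> is \<open>X i\<close>).\<close>
definition big_join :: "(nat \<Rightarrow> nat set) \<Rightarrow> nat set" where
  "big_join X = {prod_encode (i, n) | i n. n \<in> X i}"

definition coded_by :: "nat set set \<Rightarrow> (nat \<Rightarrow> nat set) \<Rightarrow> nat set \<Rightarrow> bool" where
  "coded_by S X M \<longleftrightarrow> S = range X \<and> M = big_join X"

definition fin_set :: "nat \<Rightarrow> nat set" where
  "fin_set m = {k. bit m k}"

text \<open>\<open>U Z e\<close>: the upward-closed class generated by the finite sets enumerated by program \<open>e\<close>
  relative to oracle \<open>Z\<close>; as \<open>e\<close> ranges over programs this enumerates, uniformly in \<open>Z\<close>,
  exactly the upward-closed \<Sigma>^0_1(Z) classes.\<close>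
definition U :: "nat set \<Rightarrow> recf \<Rightarrow> nat set set" where
  "U Z e = {Y. \<exists>n m. ev Z e [n] m \<and> fin_set m \<subseteq> Y}"

definition U_C :: "(nat \<Rightarrow> nat set) \<Rightarrow> (recf \<times> nat) set \<Rightarrow> nat set set" where
  "U_C X C = (\<Inter>(e, i)\<in>C. U (X i) e)"

definition largeness :: "nat set set \<Rightarrow> bool" where
  "largeness A \<longleftrightarrow> A \<noteq> {} \<and> (\<forall>Y Z. Y \<in> A \<and> Y \<subseteq> Z \<longrightarrow> Z \<in> A) \<and>
     (\<forall>k (Y :: nat \<Rightarrow> nat set). (\<Union>j<k. Y j) = UNIV \<longrightarrow> (\<exists>j<k. Y j \<in> A))"

definition partition_regular :: "nat set set \<Rightarrow> bool" where
  "partition_regular L \<longleftrightarrow> largeness L \<and>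
     (\<forall>X\<in>L. \<forall>k (Y :: nat \<Rightarrow> nat set). X \<subseteq> (\<Union>j<k. Y j) \<longrightarrow> (\<exists>j<k. Y j \<in> L))"

definition M_minimal :: "nat set set \<Rightarrow> nat set set \<Rightarrow> bool" where
  "M_minimal S A \<longleftrightarrow> (\<forall>Z\<in>S. \<forall>e. A \<subseteq> U Z e \<or> \<not> largeness (A \<inter> U Z e))"

end

theory Submission
  imports Defs
begin

text \<open>Suppose \<open>X0 \<subseteq> A \<union> B\<close> lies in \<open>L = \<U>\<^sup>\<M>\<^sub>C\<close> while \<open>A\<close> and \<open>B\<close> do not. Then \<open>A \<notin> P0\<close>
  and \<open>B \<notin> P1\<close> for two conjuncts \<open>P0 = \<U>\<^sup>X\<^sub>e\<close>, \<open>P1 = \<U>\<^sup>Y\<^sub>e'\<close> of \<open>L\<close>. Let \<open>W\<close> be the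
  class of sets containing a finite \<open>F\<close> all of whose splittings \<open>F = T \<union> (F - T)\<close> have
  \<open>T \<in> P0\<close> or \<open>F - T \<in> P1\<close>. It is an upward closed \<open>\<Sigma>\<^sup>0\<^sub>1(X \<oplus> Y)\<close> class, and \<open>X0 \<notin> W\<close>
  (take \<open>T = F \<inter> A\<close>). On the other hand the sets all of whose splittings have a part in \<open>L\<close>
  form a largeness class inside \<open>L\<close>, and by compactness (Koenig's lemma) inside \<open>W\<close>. So
  \<open>L \<inter> W\<close> is a largeness class although \<open>L \<subseteq> W\<close> fails, contradicting \<open>\<M>\<close>-minimality.\<close>

unbundle bit_operations_syntax

section \<open>Evaluation of oracle programs\<close>

lemma list_all2_functional:
  assumes "list_all2 (\<lambda>g y. P g y \<and> (\<forall>y'. P g y' \<longrightarrow> y = y')) gs ys"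
    and "list_all2 P gs ys'"
  shows "ys = ys'"
  using assms
proof (induction gs arbitrary: ys ys')
  case (Cons g gs)
  then show ?case by (cases ys; cases ys') auto
qed simp

lemma ex_list_all2_Cons1 [simp]:
  "(\<exists>ys. list_all2 P (x # xs) ys \<and> R ys) \<longleftrightarrow> (\<exists>y ys. P x y \<and> list_all2 P xs ys \<and> R (y # ys))"
  by (auto simp: list_all2_Cons1)

lemma ev_det: "ev A p xs y \<Longrightarrow> ev A p xs y' \<Longrightarrow> y = y'"
proof (induction arbitrary: y' rule: ev.induct)
  case (ev_comp xs gs ys f z)
  from ev_comp.prems obtain ys' where "list_all2 (\<lambda>g. ev A g xs) gs ys'" "ev A f ys' y'"
    by (cases rule: ev.cases) auto
  moreover from ev_comp.IH(1) this(1) have "ys = ys'" by (rule list_all2_functional)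
  ultimately show ?case using ev_comp.IH(2) by blast
next
  case (ev_mn f n xs)
  from ev_mn.prems have y': "ev A f (y' # xs) 0" "\<forall>m<y'. \<exists>y>0. ev A f (m # xs) y"
    by (cases rule: ev.cases, auto)+
  show ?case
  proof (rule linorder_cases)
    assume "n < y'"
    then obtain y where "y > 0" "ev A f (n # xs) y" using y'(2) by blast
    with ev_mn.IH(1) show ?thesis by (metis less_irrefl)
  next
    assume "y' < n"
    then obtain y where "y > 0" "\<forall>z. ev A f (y' # xs) z \<longrightarrow> y = z"
      using ev_mn.IH(2) by blast
    with y'(1) show ?thesis by blast
  qed
next
  case (ev_prim0 f xs z g)
  from ev_prim0.prems have "ev A f xs y'" by (cases rule: ev.cases) auto
  then show ?case using ev_prim0.IH by blast
next
  case (ev_primS f g n xs y z)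
  from ev_primS.prems obtain y1 where "ev A (Prim f g) (n # xs) y1" "ev A g (y1 # n # xs) y'"
    by (cases rule: ev.cases) auto
  then show ?case using ev_primS.IH by metis
qed (auto elim: ev.cases)

lemma ev_eq_iff: "ev A p xs v \<Longrightarrow> ev A p xs y \<longleftrightarrow> y = v"
  using ev_det by blast

lemma ev_Zero_iff [simp]: "ev A Zero xs y \<longleftrightarrow> y = 0"
  by (auto elim: ev.cases intro: ev.intros)

lemma ev_Succ_Nil [simp]: "\<not> ev A Succ [] y"
  by (auto elim: ev.cases)

lemma ev_Succ_iff [simp]: "ev A Succ (x # xs) y \<longleftrightarrow> y = Suc x"
  by (auto elim: ev.cases intro: ev.intros)

lemma ev_Proj_iff [simp]: "ev A (Proj i) xs y \<longleftrightarrow> i < length xs \<and> y = xs ! i"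
  by (auto elim: ev.cases intro: ev.intros)

lemma ev_Oracle_Nil [simp]: "\<not> ev A Oracle [] y"
  by (auto elim: ev.cases)

lemma ev_Oracle_iff [simp]: "ev A Oracle (x # xs) y \<longleftrightarrow> y = (if x \<in> A then 1 else 0)"
proof
  show "ev A Oracle (x # xs) y \<Longrightarrow> y = (if x \<in> A then 1 else 0)"
    by (cases rule: ev.cases) auto
  show "y = (if x \<in> A then 1 else 0) \<Longrightarrow> ev A Oracle (x # xs) y"
    using ev.ev_oracle by simp
qed

lemma ev_Comp_iff [simp]:
  "ev A (Comp f gs) xs z \<longleftrightarrow> (\<exists>ys. list_all2 (\<lambda>g. ev A g xs) gs ys \<and> ev A f ys z)"
  by (auto elim: ev.cases intro: ev.intros)

lemma ev_Prim_Nil [simp]: "\<not> ev A (Prim f g) [] z"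
  by (auto elim: ev.cases)

lemma ev_Prim0_iff [simp]: "ev A (Prim f g) (0 # xs) z \<longleftrightarrow> ev A f xs z"
  by (auto elim: ev.cases intro: ev.intros)

lemma ev_PrimS_iff [simp]:
  "ev A (Prim f g) (Suc n # xs) z \<longleftrightarrow> (\<exists>y. ev A (Prim f g) (n # xs) y \<and> ev A g (y # n # xs) z)"
  by (auto elim: ev.cases intro: ev.intros)

lemma ev_Mn_iff [simp]:
  "ev A (Mn f) xs n \<longleftrightarrow> ev A f (n # xs) 0 \<and> (\<forall>m<n. \<exists>y>0. ev A f (m # xs) y)"
  by (auto elim: ev.cases intro: ev.intros)

section \<open>Basic programs\<close>

fun const_prog :: "nat \<Rightarrow> recf" where
  "const_prog 0 = Zero"
| "const_prog (Suc c) = Comp Succ [const_prog c]"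

lemma ev_const_prog [simp]: "ev A (const_prog c) xs y \<longleftrightarrow> y = c"
  by (induction c arbitrary: y) auto

definition "add_prog = Prim (Proj 0) (Comp Succ [Proj 0])"

lemma ev_add_prog [simp]: "ev A add_prog (a # b # xs) y \<longleftrightarrow> y = a + b"
proof (rule ev_eq_iff)
  show "ev A add_prog (a # b # xs) (a + b)"
    unfolding add_prog_def by (induction a) auto
qed

definition "pred_prog = Prim Zero (Proj 1)"

lemma ev_pred_prog [simp]: "ev A pred_prog (a # xs) y \<longleftrightarrow> y = a - 1"
proof (rule ev_eq_iff)
  show "ev A pred_prog (a # xs) (a - 1)"
    unfolding pred_prog_def by (induction a) auto
qed

definition "monus_prog = Prim (Proj 0) (Comp pred_prog [Proj 0])"

lemma ev_monus_prog [simp]: "ev A monus_prog (a # b # xs) y \<longleftrightarrow> y = b - a"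
proof (rule ev_eq_iff)
  show "ev A monus_prog (a # b # xs) (b - a)"
    unfolding monus_prog_def by (induction a) auto
qed

definition "min_prog = Comp monus_prog [Comp monus_prog [Proj 1, Proj 0], Proj 0]"

lemma ev_min_prog [simp]: "ev A min_prog (a # b # xs) y \<longleftrightarrow> y = min a b"
  unfolding min_prog_def by auto

definition "mod2_prog = Prim Zero (Comp monus_prog [Proj 0, const_prog 1])"

lemma ev_mod2_prog [simp]: "ev A mod2_prog (a # xs) y \<longleftrightarrow> y = a mod 2"
proof (rule ev_eq_iff)
  show "ev A mod2_prog (a # xs) (a mod 2)"
    unfolding mod2_prog_def by (induction a) (auto simp: mod_Suc)
qed

definition "div2_prog = Prim Zero (Comp add_prog [Proj 0, Comp mod2_prog [Proj 1]])"

lemma ev_div2_prog [simp]: "ev A div2_prog (a # xs) y \<longleftrightarrow> y = a div 2"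
proof (rule ev_eq_iff)
  show "ev A div2_prog (a # xs) (a div 2)"
    unfolding div2_prog_def by (induction a) (auto simp: div_Suc mod_Suc)
qed

definition "bit_prog = Comp mod2_prog [Prim (Proj 0) (Comp div2_prog [Proj 0])]"

lemma ev_bit_prog [simp]: "ev A bit_prog (k # x # xs) y \<longleftrightarrow> y = of_bool (bit x k)"
proof (rule ev_eq_iff)
  have "ev A (Prim (Proj 0) (Comp div2_prog [Proj 0])) (k # x # xs) (x div 2 ^ k)"
  proof (induction k)
    case (Suc k)
    moreover have "x div 2 ^ Suc k = x div 2 ^ k div 2"
      by (metis div_mult2_eq power_Suc2)
    ultimately show ?case by auto
  qed simp
  then show "ev A bit_prog (k # x # xs) (of_bool (bit x k))"
    unfolding bit_prog_def by (auto simp: bit_iff_odd odd_iff_mod_2_eq_one)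
qed

definition "triangle_prog = Prim Zero (Comp add_prog [Proj 0, Comp Succ [Proj 1]])"

lemma ev_triangle_prog [simp]: "ev A triangle_prog (k # xs) y \<longleftrightarrow> y = triangle k"
proof (rule ev_eq_iff)
  show "ev A triangle_prog (k # xs) (triangle k)"
    unfolding triangle_prog_def by (induction k) auto
qed

definition diag :: "nat \<Rightarrow> nat" where
  "diag n = fst (prod_decode n) + snd (prod_decode n)"

lemma triangle_diag_add_fst: "triangle (diag n) + fst (prod_decode n) = n"
proof -
  obtain i j where ij: "prod_decode n = (i, j)" by fastforce
  then have "prod_encode (i, j) = n" by (metis prod_decode_inverse)
  with ij show ?thesis by (simp add: diag_def prod_encode_def)
qed

lemma fst_prod_decode_le_diag: "fst (prod_decode n) \<le> diag n"
  by (simp add: diag_def)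

lemma triangle_mono: "a \<le> b \<Longrightarrow> triangle a \<le> triangle b"
  by (induction b) (auto simp: le_Suc_eq)

text \<open>\<open>diag n\<close> is the least \<open>d\<close> with \<open>n < triangle (Suc d)\<close>.\<close>

definition "diag_prog = Mn (Comp monus_prog [Comp triangle_prog [Comp Succ [Proj 0]], Comp Succ [Proj 1]])"

lemma ev_diag_prog [simp]: "ev A diag_prog (n # xs) y \<longleftrightarrow> y = diag n"
proof (rule ev_eq_iff)
  have "Suc n \<le> triangle (Suc (diag n))"
    using triangle_diag_add_fst[of n] fst_prod_decode_le_diag[of n] by simp
  moreover have "triangle (Suc m) \<le> n" if "m < diag n" for m
    using triangle_mono[of "Suc m" "diag n"] that triangle_diag_add_fst[of n] by simp
  ultimately show "ev A diag_prog (n # xs) (diag n)"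
    unfolding diag_prog_def by (auto simp del: triangle_Suc simp: less_Suc_eq_le)
qed

definition "fst_prog = Comp monus_prog [Comp triangle_prog [diag_prog], Proj 0]"

definition "snd_prog = Comp monus_prog [fst_prog, diag_prog]"

lemma ev_fst_prog [simp]: "ev A fst_prog (n # xs) y \<longleftrightarrow> y = fst (prod_decode n)"
  unfolding fst_prog_def using triangle_diag_add_fst[of n] by auto

lemma ev_snd_prog [simp]: "ev A snd_prog (n # xs) y \<longleftrightarrow> y = snd (prod_decode n)"
  unfolding snd_prog_def using triangle_diag_add_fst[of n] by (auto simp: diag_def)

text \<open>Lists of numbers are coded by iterated pairing; the \<open>t\<close>-th entry is read off by
  dropping \<open>t\<close> entries with \<open>snd \<circ> prod_decode\<close>.\<close>

fun list_code :: "nat list \<Rightarrow> nat" where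
  "list_code [] = 0"
| "list_code (v # vs) = prod_encode (v, list_code vs)"

definition list_nth_code :: "nat \<Rightarrow> nat \<Rightarrow> nat" where
  "list_nth_code w t = fst (prod_decode (((\<lambda>w. snd (prod_decode w)) ^^ t) w))"

lemma list_nth_code_list_code:
  "t < length vs \<Longrightarrow> list_nth_code (list_code vs) t = vs ! t"
proof (induction vs arbitrary: t)
  case (Cons v vs)
  then show ?case
    by (cases t) (simp_all add: list_nth_code_def funpow_Suc_right del: funpow.simps)
qed simp

definition "list_nth_prog = Comp fst_prog [Prim (Proj 0) (Comp snd_prog [Proj 0])]"

lemma ev_list_nth_prog [simp]: "ev A list_nth_prog (t # w # xs) y \<longleftrightarrow> y = list_nth_code w t"
proof (rule ev_eq_iff)
  have "ev A (Prim (Proj 0) (Comp snd_prog [Proj 0])) (t # w # xs)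
          (((\<lambda>w. snd (prod_decode w)) ^^ t) w)"
    by (induction t) auto
  then show "ev A list_nth_prog (t # w # xs) (list_nth_code w t)"
    unfolding list_nth_prog_def list_nth_code_def by auto
qed

text \<open>Bounded sum; the summand program also receives the running total as its first
  argument, which it must ignore.\<close>

definition bsum_prog :: "recf \<Rightarrow> recf" where
  "bsum_prog body = Prim Zero (Comp add_prog [Proj 0, body])"

lemma ev_bsum_prog_Suc:
  "ev A (bsum_prog body) (Suc n # xs) v \<longleftrightarrow>
    (\<exists>y z. ev A (bsum_prog body) (n # xs) y \<and> ev A body (y # n # xs) z \<and> v = y + z)"
proof -
  have "ev A (Comp add_prog [Proj 0, body]) (y # n # xs) v \<longleftrightarrow>
      (\<exists>z. ev A body (y # n # xs) z \<and> v = y + z)" for y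
  proof
    assume "\<exists>z. ev A body (y # n # xs) z \<and> v = y + z"
    then obtain z where "ev A body (y # n # xs) z" "v = y + z" by blast
    then show "ev A (Comp add_prog [Proj 0, body]) (y # n # xs) v"
      by (auto intro!: exI[of _ "[y, z]"])
  qed auto
  then show ?thesis unfolding bsum_prog_def ev_PrimS_iff by blast
qed

lemma ev_bsum_prog_0_iff:
  assumes "\<And>k s y. k < n \<Longrightarrow> ev A body (s # k # xs) y \<longleftrightarrow> P k y"
  shows "ev A (bsum_prog body) (n # xs) 0 \<longleftrightarrow> (\<forall>k<n. P k 0)"
  using assms
proof (induction n)
  case (Suc n)
  have "ev A (bsum_prog body) (Suc n # xs) 0 \<longleftrightarrow> ev A (bsum_prog body) (n # xs) 0 \<and> P n 0"
    using Suc.prems unfolding ev_bsum_prog_Suc by auto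
  with Suc show ?case by (auto simp: less_Suc_eq)
qed (simp add: bsum_prog_def)

lemma ev_bsum_prog:
  assumes "\<And>k s y. k < n \<Longrightarrow> ev A body (s # k # xs) y \<longleftrightarrow> y = g k"
  shows "ev A (bsum_prog body) (n # xs) v \<longleftrightarrow> v = (\<Sum>k<n. g k)"
proof (rule ev_eq_iff)
  show "ev A (bsum_prog body) (n # xs) (\<Sum>k<n. g k)"
    using assms
  proof (induction n)
    case (Suc n)
    then have "ev A (bsum_prog body) (n # xs) (\<Sum>k<n. g k)" by auto
    with Suc.prems show ?case unfolding bsum_prog_def by auto
  qed (simp add: bsum_prog_def)
qed

section \<open>Relativisation to a join\<close>

fun oracle_subst :: "recf \<Rightarrow> recf \<Rightarrow> recf" where
  "oracle_subst d Oracle = Comp Oracle [d]"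
| "oracle_subst d (Comp f gs) = Comp (oracle_subst d f) (map (oracle_subst d) gs)"
| "oracle_subst d (Prim f g) = Prim (oracle_subst d f) (oracle_subst d g)"
| "oracle_subst d (Mn f) = Mn (oracle_subst d f)"
| "oracle_subst d Zero = Zero"
| "oracle_subst d Succ = Succ"
| "oracle_subst d (Proj i) = Proj i"

lemma ev_oracle_subst:
  assumes d: "\<And>xs y. ev Z d xs y \<longleftrightarrow> xs \<noteq> [] \<and> y = h (hd xs)"
    and h: "\<And>x. h x \<in> Z \<longleftrightarrow> x \<in> B"
  shows "ev Z (oracle_subst d p) xs y \<longleftrightarrow> ev B p xs y"
proof (induction p arbitrary: xs y)
  case Oracle
  show ?case
    by (cases xs) (auto simp: d h)
next
  case (Comp f gs)
  have "list_all2 (\<lambda>g. ev Z g xs) (map (oracle_subst d) gs) ys \<longleftrightarrow>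
        list_all2 (\<lambda>g. ev B g xs) gs ys" for ys
    by (simp add: list_all2_conv_all_nth Comp.IH(2))
  then show ?case using Comp.IH(1) by simp
next
  case (Prim f g)
  show ?case
  proof (cases xs)
    case (Cons n xs')
    have "ev Z (oracle_subst d (Prim f g)) (n # xs') y \<longleftrightarrow> ev B (Prim f g) (n # xs') y" for y
      by (induction n arbitrary: y) (auto simp: Prim.IH)
    with Cons show ?thesis by simp
  qed simp
next
  case Succ
  show ?case by (cases xs) auto
qed auto

definition "double_prog = Comp add_prog [Proj 0, Proj 0]"

lemma ev_double_prog: "ev A double_prog xs y \<longleftrightarrow> xs \<noteq> [] \<and> y = 2 * hd xs"
  unfolding double_prog_def by (cases xs) auto

lemma even_mem_join_iff: "2 * x \<in> join A B \<longleftrightarrow> x \<in> A"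
  unfolding join_def by auto presburger

lemma odd_mem_join_iff: "2 * x + 1 \<in> join A B \<longleftrightarrow> x \<in> B"
  unfolding join_def by auto presburger

lemma ev_join_left: "ev (join A B) (oracle_subst double_prog p) xs y \<longleftrightarrow> ev A p xs y"
  by (rule ev_oracle_subst[where h = "\<lambda>x. 2 * x"])
    (auto simp: ev_double_prog even_mem_join_iff)

lemma ev_join_right:
  "ev (join A B) (oracle_subst (Comp Succ [double_prog]) p) xs y \<longleftrightarrow> ev B p xs y"
  by (rule ev_oracle_subst[where h = "\<lambda>x. 2 * x + 1"])
    (auto simp: ev_double_prog odd_mem_join_iff[simplified])

lemma bit_imp_less: "bit (a::nat) k \<Longrightarrow> k < a"
  by (metis bit_iff_odd div_less dvd_0_right less_exp not_le order.strict_trans2)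

lemma fin_set_subset_lessThan: "fin_set x \<subseteq> {..<x}"
  unfolding fin_set_def using bit_imp_less by auto

lemma ex_fin_set_eq: "finite K \<Longrightarrow> \<exists>c. fin_set c = K"
proof (induction K rule: finite_induct)
  case empty
  show ?case by (rule exI[of _ 0]) (simp add: fin_set_def)
next
  case (insert k K)
  then obtain c where "fin_set c = K" by blast
  then show ?case by (intro exI[of _ "c OR 2 ^ k"]) (auto simp: fin_set_def bit_or_iff bit_exp_iff)
qed

lemma fin_set_and: "fin_set (m AND c) = fin_set m \<inter> fin_set c"
  by (auto simp: fin_set_def bit_and_iff)

lemma and_le_nat: "(m::nat) AND c \<le> m"
proof -
  have "int (m AND c) = int m AND int c" by (simp add: of_nat_and_eq)
  also have "\<dots> \<le> int m" by simp
  finally show ?thesis by linarith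
qed

lemma fin_set_Suc_0: "fin_set (Suc 0) = {0}"
  by (auto simp: fin_set_def bit_1_iff[where 'a = nat, simplified])

lemma mem_U_iff: "Y \<in> U Z e \<longleftrightarrow> (\<exists>n m. ev Z e [n] m \<and> fin_set m \<subseteq> Y)"
  by (simp add: U_def)

definition upclosed :: "'a set set \<Rightarrow> bool" where
  "upclosed P \<longleftrightarrow> (\<forall>Y Y'. Y \<in> P \<longrightarrow> Y \<subseteq> Y' \<longrightarrow> Y' \<in> P)"

definition finitary :: "nat set set \<Rightarrow> bool" where
  "finitary P \<longleftrightarrow> (\<forall>Y\<in>P. \<exists>n. Y \<inter> {..<n} \<in> P)"

lemma upclosed_U: "upclosed (U Z e)"
  unfolding upclosed_def U_def by auto

lemma finitary_U: "finitary (U Z e)"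
  unfolding finitary_def
proof
  fix Y assume "Y \<in> U Z e"
  then obtain n m where "ev Z e [n] m" "fin_set m \<subseteq> Y" unfolding mem_U_iff by blast
  with fin_set_subset_lessThan[of m] have "Y \<inter> {..<m} \<in> U Z e" unfolding mem_U_iff by blast
  then show "\<exists>n. Y \<inter> {..<n} \<in> U Z e" ..
qed

lemma U_const_prog_1: "U Z (const_prog 1) = {Y. 0 \<in> Y}"
  by (auto simp: U_def fin_set_Suc_0)

section \<open>A program enumerating the split class\<close>

definition split_class :: "nat set set \<Rightarrow> nat set set \<Rightarrow> nat set set" where
  "split_class P0 P1 = {Y. \<exists>F. finite F \<and> F \<subseteq> Y \<and> (\<forall>T\<subseteq>F. T \<in> P0 \<or> F - T \<in> P1)}"

definition defect :: "nat \<Rightarrow> (nat \<Rightarrow> bool) \<Rightarrow> nat" where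
  "defect x P = (\<Sum>k<x. of_bool (bit x k) - of_bool (P k))"

lemma defect_eq_0_iff: "defect x P = 0 \<longleftrightarrow> fin_set x \<subseteq> {k. P k}"
  unfolding defect_def fin_set_def using bit_imp_less by auto

definition "subset_defect_prog =
  Comp (bsum_prog (Comp monus_prog [Comp bit_prog [Proj 1, Proj 3], Comp bit_prog [Proj 1, Proj 2]]))
    [Proj 0, Proj 0, Proj 1]"

lemma ev_subset_defect_prog [simp]:
  "ev A subset_defect_prog (x # t # xs) v \<longleftrightarrow> v = defect x (bit t)"
  unfolding subset_defect_prog_def defect_def by (auto simp: ev_bsum_prog)

definition "diff_defect_prog =
  Comp (bsum_prog (Comp monus_prog
      [Comp monus_prog [Comp bit_prog [Proj 1, Proj 4], Comp bit_prog [Proj 1, Proj 3]],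
       Comp bit_prog [Proj 1, Proj 2]]))
    [Proj 0, Proj 0, Proj 1, Proj 2]"

lemma ev_diff_defect_prog [simp]:
  "ev A diff_defect_prog (y # m # t # xs) v \<longleftrightarrow> v = defect y (\<lambda>k. bit m k \<and> \<not> bit t k)"
proof -
  have "(of_bool a - of_bool b :: nat) = of_bool (a \<and> \<not> b)" for a b by simp
  then show ?thesis unfolding diff_defect_prog_def defect_def by (simp add: ev_bsum_prog)
qed

text \<open>On arguments \<open>s # t # m # w # _\<close>, ignoring \<open>s\<close>: with \<open>(a, b)\<close> the \<open>t\<close>-th pair
  coded in \<open>w\<close>, run \<open>e0\<close> on \<open>a\<close> and \<open>e1\<close> on \<open>b\<close>, and return \<open>0\<close> iff the set found by
  \<open>e0\<close> lies in \<open>fin_set t\<close> or the one found by \<open>e1\<close> lies in \<open>fin_set m - fin_set t\<close>.\<close>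

definition split_fail_prog :: "recf \<Rightarrow> recf \<Rightarrow> recf" where
  "split_fail_prog e0 e1 =
    (let ab = Comp list_nth_prog [Proj 1, Proj 3];
         x = Comp (oracle_subst double_prog e0) [Comp fst_prog [ab]];
         y = Comp (oracle_subst (Comp Succ [double_prog]) e1) [Comp snd_prog [ab]]
     in Comp min_prog [Comp subset_defect_prog [x, Proj 1], Comp diff_defect_prog [y, Proj 2, Proj 1]])"

lemma ev_split_fail_prog:
  "ev (join A B) (split_fail_prog e0 e1) (s # t # m # w # xs) v \<longleftrightarrow>
    (\<exists>x y. ev A e0 [fst (prod_decode (list_nth_code w t))] x \<and>
           ev B e1 [snd (prod_decode (list_nth_code w t))] y \<and>
           v = min (defect x (bit t)) (defect y (\<lambda>k. bit m k \<and> \<not> bit t k)))"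
  unfolding split_fail_prog_def Let_def by (auto simp: ev_join_left ev_join_right)

definition split_check_prog :: "recf \<Rightarrow> recf \<Rightarrow> recf" where
  "split_check_prog e0 e1 =
    Comp (bsum_prog (split_fail_prog e0 e1)) [Comp Succ [fst_prog], fst_prog, snd_prog]"

lemma ev_split_check_prog_0_iff:
  "ev (join A B) (split_check_prog e0 e1) [prod_encode (m, w)] 0 \<longleftrightarrow>
    (\<forall>t\<le>m. \<exists>x y. ev A e0 [fst (prod_decode (list_nth_code w t))] x \<and>
                 ev B e1 [snd (prod_decode (list_nth_code w t))] y \<and>
                 (fin_set x \<subseteq> fin_set t \<or> fin_set y \<subseteq> fin_set m - fin_set t))"
proof -
  have min_eq_0_iff: "min a b = 0 \<longleftrightarrow> a = 0 \<or> b = 0" for a b :: nat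
    by linarith
  have "min (defect x (bit t)) (defect y (\<lambda>k. bit m k \<and> \<not> bit t k)) = 0 \<longleftrightarrow>
      fin_set x \<subseteq> fin_set t \<or> fin_set y \<subseteq> fin_set m - fin_set t" for x y t
    unfolding min_eq_0_iff defect_eq_0_iff fin_set_def by auto
  then show ?thesis
    unfolding split_check_prog_def
    by (simp add: ev_bsum_prog_0_iff[OF ev_split_fail_prog] less_Suc_eq_le)
qed

text \<open>Outputs \<open>m\<close> on input \<open>\<langle>m, w\<rangle>\<close> if \<open>w\<close> codes witnesses for all \<open>t \<le> m\<close>, and diverges
  otherwise.\<close>

definition split_prog :: "recf \<Rightarrow> recf \<Rightarrow> recf" where
  "split_prog e0 e1 = Comp add_prog [fst_prog, Mn (Comp (split_check_prog e0 e1) [Proj 1])]"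

lemma ev_split_prog:
  "ev Z (split_prog e0 e1) [prod_encode (m, w)] out \<longleftrightarrow>
    out = m \<and> ev Z (split_check_prog e0 e1) [prod_encode (m, w)] 0"
  (is "_ \<longleftrightarrow> _ \<and> ?check")
proof -
  have "ev Z (Mn (Comp (split_check_prog e0 e1) [Proj 1])) [prod_encode (m, w)] g \<longleftrightarrow>
      g = 0 \<and> ?check" for g
    using ev_det[of Z "split_check_prog e0 e1" "[prod_encode (m, w)]" 0]
    by auto
  then show ?thesis unfolding split_prog_def by auto
qed

lemma ex_ev_split_prog_iff:
  "(\<exists>n. ev (join A B) (split_prog e0 e1) [n] m) \<longleftrightarrow>
    (\<forall>t\<le>m. \<exists>a b x y. ev A e0 [a] x \<and> ev B e1 [b] y \<and>
                     (fin_set x \<subseteq> fin_set t \<or> fin_set y \<subseteq> fin_set m - fin_set t))"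
  (is "_ \<longleftrightarrow> (\<forall>t\<le>m. \<exists>a b. ?good t a b)")
proof
  assume "\<exists>n. ev (join A B) (split_prog e0 e1) [n] m"
  then obtain m' w where "ev (join A B) (split_prog e0 e1) [prod_encode (m', w)] m"
    by (metis prod_decode_inverse prod.collapse)
  then show "\<forall>t\<le>m. \<exists>a b. ?good t a b"
    unfolding ev_split_prog ev_split_check_prog_0_iff by blast
next
  assume "\<forall>t\<le>m. \<exists>a b. ?good t a b"
  then have "\<forall>t. \<exists>p. t \<le> m \<longrightarrow> ?good t (fst p) (snd p)" by fastforce
  then obtain ab where ab: "\<And>t. t \<le> m \<Longrightarrow> ?good t (fst (ab t)) (snd (ab t))"
    by metis
  define w where "w = list_code (map (\<lambda>t. prod_encode (ab t)) [0..<Suc m])"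
  have "prod_decode (list_nth_code w t) = ab t" if "t \<le> m" for t
    using that by (simp add: w_def list_nth_code_list_code nth_append del: upt_Suc)
  then have "ev (join A B) (split_prog e0 e1) [prod_encode (m, w)] m"
    unfolding ev_split_prog ev_split_check_prog_0_iff using ab by auto
  then show "\<exists>n. ev (join A B) (split_prog e0 e1) [n] m" by blast
qed

lemma U_split_prog:
  assumes "UNIV \<in> U A e0" and "UNIV \<in> U B e1"
  shows "U (join A B) (split_prog e0 e1) = split_class (U A e0) (U B e1)"
proof (intro set_eqI iffI)
  fix Y assume "Y \<in> U (join A B) (split_prog e0 e1)"
  then obtain n m where "ev (join A B) (split_prog e0 e1) [n] m" and m: "fin_set m \<subseteq> Y"
    unfolding mem_U_iff by blast
  then have good: "\<forall>t\<le>m. \<exists>a b x y. ev A e0 [a] x \<and> ev B e1 [b] y \<and>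
                     (fin_set x \<subseteq> fin_set t \<or> fin_set y \<subseteq> fin_set m - fin_set t)"
    unfolding ex_ev_split_prog_iff[symmetric] by blast
  have fin: "finite (fin_set m)"
    using fin_set_subset_lessThan finite_subset by blast
  have "T \<in> U A e0 \<or> fin_set m - T \<in> U B e1" if T: "T \<subseteq> fin_set m" for T
  proof -
    obtain c where "fin_set c = T"
      using ex_fin_set_eq finite_subset[OF T fin] by blast
    with T have "fin_set (m AND c) = T" by (auto simp: fin_set_and)
    with good[rule_format, OF and_le_nat[of m c]] show ?thesis
      unfolding mem_U_iff by auto
  qed
  with fin show "Y \<in> split_class (U A e0) (U B e1)"
    unfolding split_class_def using m by blast
next
  fix Y assume "Y \<in> split_class (U A e0) (U B e1)"
  then obtain F where F: "finite F" "F \<subseteq> Y"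
    and good: "\<And>T. T \<subseteq> F \<Longrightarrow> T \<in> U A e0 \<or> F - T \<in> U B e1"
    unfolding split_class_def by blast
  obtain m where m: "fin_set m = F" using ex_fin_set_eq F(1) by blast
  obtain a0 x0 b0 y0 where "ev A e0 [a0] x0" "ev B e1 [b0] y0"
    using assms unfolding mem_U_iff by blast
  have "\<exists>a b x y. ev A e0 [a] x \<and> ev B e1 [b] y \<and>
          (fin_set x \<subseteq> fin_set t \<or> fin_set y \<subseteq> fin_set m - fin_set t)" for t
  proof -
    have "fin_set t \<inter> F \<in> U A e0 \<or> F - fin_set t \<inter> F \<in> U B e1" by (rule good) blast
    then show ?thesis
    proof
      assume "fin_set t \<inter> F \<in> U A e0"
      then obtain a x where "ev A e0 [a] x" "fin_set x \<subseteq> fin_set t"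
        unfolding mem_U_iff by blast
      with \<open>ev B e1 [b0] y0\<close> show ?thesis by blast
    next
      assume "F - fin_set t \<inter> F \<in> U B e1"
      then obtain b y where "ev B e1 [b] y" "fin_set y \<subseteq> fin_set m - fin_set t"
        unfolding mem_U_iff m by blast
      with \<open>ev A e0 [a0] x0\<close> show ?thesis by blast
    qed
  qed
  then obtain n where "ev (join A B) (split_prog e0 e1) [n] m"
    using ex_ev_split_prog_iff by blast
  with m F(2) show "Y \<in> U (join A B) (split_prog e0 e1)"
    unfolding mem_U_iff by blast
qed

section \<open>Compactness\<close>

lemma koenig_restrictions:
  fixes Q :: "nat \<Rightarrow> nat set \<Rightarrow> bool"
  assumes restrict: "\<And>n N B. n \<le> N \<Longrightarrow> Q N B \<Longrightarrow> Q n (B \<inter> {..<n})"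
    and ex: "\<And>n. \<exists>B. Q n B"
  shows "\<exists>B. \<forall>n. Q n (B \<inter> {..<n})"
proof -
  define extendable where
    "extendable n C \<longleftrightarrow> (\<forall>N\<ge>n. \<exists>B. Q N B \<and> B \<inter> {..<n} = C)" for n C
  have extendable_subset: "C \<subseteq> {..<n}" if "extendable n C" for n C
    using that unfolding extendable_def by (metis inf_le2 order_refl)
  have extendable_Suc: "extendable (Suc n) C \<or> extendable (Suc n) (insert n C)"
    if C: "extendable n C" for n C
  proof (rule ccontr)
    assume "\<not> ?thesis"
    then obtain N1 N2 where N: "Suc n \<le> N1" "Suc n \<le> N2"
      and no1: "\<And>B. Q N1 B \<Longrightarrow> B \<inter> {..<Suc n} \<noteq> C"
      and no2: "\<And>B. Q N2 B \<Longrightarrow> B \<inter> {..<Suc n} \<noteq> insert n C"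
      unfolding extendable_def by auto
    have "n \<le> max N1 N2" using N by simp
    with C obtain B where B: "Q (max N1 N2) B" "B \<inter> {..<n} = C"
      unfolding extendable_def by blast
    have "Q N1 (B \<inter> {..<N1})" "Q N2 (B \<inter> {..<N2})"
      using restrict[OF _ B(1)] by simp_all
    moreover have "(B \<inter> {..<N1}) \<inter> {..<Suc n} = B \<inter> {..<Suc n}"
      "(B \<inter> {..<N2}) \<inter> {..<Suc n} = B \<inter> {..<Suc n}"
      using N by auto
    moreover have "B \<inter> {..<Suc n} = C \<or> B \<inter> {..<Suc n} = insert n C"
      using B(2) by (auto simp: lessThan_Suc)
    ultimately show False using no1 no2 by metis
  qed
  obtain f where f: "\<And>n. extendable n (f n)" "\<And>n. f (Suc n) \<inter> {..<n} = f n"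
  proof -
    have "\<exists>f. \<forall>n. extendable n (f n) \<and> f (Suc n) \<inter> {..<n} = f n"
    proof (rule dependent_nat_choice)
      show "\<exists>C. extendable 0 C" using ex unfolding extendable_def by auto
      show "\<exists>C'. extendable (Suc n) C' \<and> C' \<inter> {..<n} = C" if "extendable n C" for n C
        using extendable_Suc[OF that] extendable_subset[OF that] by blast
    qed
    with that show ?thesis by blast
  qed
  have f_restrict: "f m \<inter> {..<n} = f n" if "n \<le> m" for m n
    using that
  proof (induction m)
    case (Suc m)
    then show ?case
      using f(2)[of m] extendable_subset[OF f(1)] by (cases "n = Suc m") (auto simp: le_Suc_eq)
  qed (use extendable_subset[OF f(1)] in auto)
  define B where "B = {k. k \<in> f (Suc k)}"
  have "B \<inter> {..<n} = f n" for n
  proof (intro set_eqI)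
    fix k
    show "k \<in> B \<inter> {..<n} \<longleftrightarrow> k \<in> f n"
    proof (cases "k < n")
      case True
      then have "f n \<inter> {..<Suc k} = f (Suc k)" by (intro f_restrict) simp
      with True show ?thesis unfolding B_def by auto
    next
      case False
      with extendable_subset[OF f(1)[of n]] show ?thesis by auto
    qed
  qed
  moreover have "Q n (f n)" for n
    using f(1)[of n] restrict[of n n] unfolding extendable_def by fastforce
  ultimately show ?thesis by metis
qed

lemma mem_split_class:
  assumes up: "upclosed P0" "upclosed P1" and fin: "finitary P0" "finitary P1"
    and split: "\<And>T. T \<subseteq> Y \<Longrightarrow> T \<in> P0 \<or> Y - T \<in> P1"
  shows "Y \<in> split_class P0 P1"
proof (rule ccontr)
  define Q where "Q n B \<longleftrightarrow> B \<subseteq> Y \<inter> {..<n} \<and> B \<notin> P0 \<and> Y \<inter> {..<n} - B \<notin> P1" for n B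
  assume no_split: "Y \<notin> split_class P0 P1"
  have "\<exists>B. Q n B" for n
  proof (rule ccontr)
    assume "\<nexists>B. Q n B"
    then have "Y \<in> split_class P0 P1"
      unfolding split_class_def Q_def by (intro CollectI exI[of _ "Y \<inter> {..<n}"]) auto
    with no_split show False ..
  qed
  moreover have "Q n (B \<inter> {..<n})" if "n \<le> N" "Q N B" for n N B
  proof -
    have "Y \<inter> {..<n} - B \<inter> {..<n} \<subseteq> Y \<inter> {..<N} - B" using \<open>n \<le> N\<close> by auto
    moreover have "B \<inter> {..<n} \<subseteq> B" by blast
    ultimately show ?thesis
      using that(2) up unfolding Q_def upclosed_def by blast
  qed
  ultimately obtain B where B: "\<And>n. Q n (B \<inter> {..<n})"
    using koenig_restrictions[of Q] by blast
  have "B \<subseteq> Y"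
  proof
    fix k assume "k \<in> B"
    with B[of "Suc k"] show "k \<in> Y" unfolding Q_def by auto
  qed
  moreover have "B \<notin> P0"
  proof
    assume "B \<in> P0"
    then obtain n where "B \<inter> {..<n} \<in> P0" using fin(1) unfolding finitary_def by blast
    with B[of n] show False unfolding Q_def by blast
  qed
  moreover have "Y - B \<notin> P1"
  proof
    assume "Y - B \<in> P1"
    then obtain n where "(Y - B) \<inter> {..<n} \<in> P1" using fin(2) unfolding finitary_def by blast
    moreover have "(Y - B) \<inter> {..<n} = Y \<inter> {..<n} - B \<inter> {..<n}" by blast
    ultimately show False using B[of n] unfolding Q_def by simp
  qed
  ultimately show False using split by blast
qed

lemma not_mem_split_class:
  assumes up: "upclosed P0" "upclosed P1"
    and "X0 \<subseteq> A \<union> B" "A \<notin> P0" "B \<notin> P1"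
  shows "X0 \<notin> split_class P0 P1"
proof
  assume "X0 \<in> split_class P0 P1"
  then obtain F where F: "F \<subseteq> X0" "\<And>T. T \<subseteq> F \<Longrightarrow> T \<in> P0 \<or> F - T \<in> P1"
    unfolding split_class_def by blast
  have "F \<inter> A \<in> P0 \<or> F - F \<inter> A \<in> P1" by (rule F(2)) blast
  moreover have "F \<inter> A \<subseteq> A" "F - F \<inter> A \<subseteq> B" using F(1) assms(3) by auto
  ultimately show False
    using up assms(4,5) unfolding upclosed_def by blast
qed

section \<open>Largeness classes\<close>

lemma upclosed_largeness: "largeness L \<Longrightarrow> upclosed L"
  by (auto simp: largeness_def upclosed_def)

lemma largeness_cover:
  fixes Y :: "nat \<Rightarrow> nat set"
  assumes "largeness L" "(\<Union>j<k. Y j) = UNIV"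
  shows "\<exists>j<k. Y j \<in> L"
proof -
  from assms(1) have "\<forall>k (Y :: nat \<Rightarrow> nat set). (\<Union>j<k. Y j) = UNIV \<longrightarrow> (\<exists>j<k. Y j \<in> L)"
    unfolding largeness_def by blast
  with assms(2) show ?thesis by blast
qed

lemma UNIV_mem_largeness: "largeness L \<Longrightarrow> UNIV \<in> L"
  using largeness_cover[where k = 1 and Y = "\<lambda>_. UNIV"] by (simp add: lessThan_Suc)

lemma largeness_mono:
  assumes "largeness R" "R \<subseteq> L" "upclosed L"
  shows "largeness L"
  unfolding largeness_def
proof (intro conjI allI impI)
  show "L \<noteq> {}" using assms(1,2) unfolding largeness_def by blast
  show "Z \<in> L" if "Y \<in> L \<and> Y \<subseteq> Z" for Y Z
    using that assms(3) unfolding upclosed_def by blast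
  show "\<exists>j<k. Y j \<in> L" if "(\<Union>j<k. Y j) = UNIV" for k and Y :: "nat \<Rightarrow> nat set"
    using largeness_cover[OF assms(1) that] assms(2) by blast
qed

definition split_core :: "nat set set \<Rightarrow> nat set set" where
  "split_core L = {Y. \<forall>T. T \<in> L \<or> Y - T \<in> L}"

lemma largeness_split_core:
  assumes "largeness L"
  shows "largeness (split_core L)"
  unfolding largeness_def
proof (intro conjI allI impI)
  have "T \<in> L \<or> UNIV - T \<in> L" for T
  proof -
    have "(\<Union>j<2::nat. if j = 0 then T else UNIV - T) = UNIV"
      by (auto simp: numeral_2_eq_2 lessThan_Suc)
    from largeness_cover[OF assms this] show ?thesis by (auto split: if_splits)
  qed
  then show "split_core L \<noteq> {}" unfolding split_core_def by blast
  show "Z \<in> split_core L" if "Y \<in> split_core L \<and> Y \<subseteq> Z" for Y Z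
  proof -
    have "Y - T \<subseteq> Z - T" for T using that by blast
    with that upclosed_largeness[OF assms] show ?thesis
      unfolding split_core_def upclosed_def by blast
  qed
  show "\<exists>j<k. Y j \<in> split_core L" if cover: "(\<Union>j<k. Y j) = UNIV" for k and Y :: "nat \<Rightarrow> nat set"
  proof (rule ccontr)
    assume "\<not> ?thesis"
    then have "\<forall>j. \<exists>T. j < k \<longrightarrow> T \<notin> L \<and> Y j - T \<notin> L"
      unfolding split_core_def by blast
    then obtain T where T: "\<And>j. j < k \<Longrightarrow> T j \<notin> L \<and> Y j - T j \<notin> L"
      by metis
    define V where "V i = (if even i then T (i div 2) else Y (i div 2) - T (i div 2))" for i
    have "(\<Union>i<2 * k. V i) = UNIV"
    proof (intro set_eqI iffI)
      fix x :: nat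
      obtain j where j: "j < k" "x \<in> Y j" using cover by blast
      show "x \<in> (\<Union>i<2 * k. V i)"
      proof (cases "x \<in> T j")
        case True
        then have "x \<in> V (2 * j)" unfolding V_def by simp
        with j(1) show ?thesis by (intro UN_I[of "2 * j"]) auto
      next
        case False
        with j(2) have "x \<in> V (2 * j + 1)" unfolding V_def by simp
        with j(1) show ?thesis by (intro UN_I[of "2 * j + 1"]) auto
      qed
    qed simp
    from largeness_cover[OF assms this] obtain i where "i < 2 * k" "V i \<in> L" by blast
    with T[of "i div 2"] show False unfolding V_def by (cases "even i") auto
  qed
qed

lemma split_core_subset:
  assumes "{} \<notin> L"
  shows "split_core L \<subseteq> L"
proof
  fix Y assume "Y \<in> split_core L"
  then have "Y \<in> L \<or> Y - Y \<in> L" unfolding split_core_def by blast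
  with assms show "Y \<in> L" by simp
qed

lemma largeness_mem_0: "largeness {Y. (0::nat) \<in> Y}"
  unfolding largeness_def
proof (intro conjI allI impI)
  show "{Y. (0::nat) \<in> Y} \<noteq> {}" by blast
  show "Z \<in> {Y. 0 \<in> Y}" if "Y \<in> {Y. 0 \<in> Y} \<and> Y \<subseteq> Z" for Y Z :: "nat set"
    using that by blast
  show "\<exists>j<k. Y j \<in> {Y. 0 \<in> Y}" if "(\<Union>j<k. Y j) = UNIV" for k and Y :: "nat \<Rightarrow> nat set"
  proof -
    have "0 \<in> (\<Union>j<k. Y j)" using that by simp
    then show ?thesis by blast
  qed
qed

lemma empty_not_mem_M_minimal:
  assumes "Z \<in> S" "largeness L" "M_minimal S L"
  shows "{} \<notin> L"
proof
  assume "{} \<in> L"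
  then have "L = UNIV" using upclosed_largeness[OF assms(2)] unfolding upclosed_def by blast
  have "L \<subseteq> U Z (const_prog 1) \<or> \<not> largeness (L \<inter> U Z (const_prog 1))"
    using assms(1,3) unfolding M_minimal_def by blast
  with \<open>L = UNIV\<close> show False
    unfolding U_const_prog_1 using largeness_mem_0 by auto
qed

lemma partition_regularI:
  assumes "largeness L" "{} \<notin> L"
    and split: "\<And>X0 A B. X0 \<in> L \<Longrightarrow> X0 \<subseteq> A \<union> B \<Longrightarrow> A \<in> L \<or> B \<in> L"
  shows "partition_regular L"
  unfolding partition_regular_def
proof (intro conjI assms(1) ballI allI impI)
  fix X0 k and Y :: "nat \<Rightarrow> nat set"
  assume "X0 \<in> L" "X0 \<subseteq> (\<Union>j<k. Y j)"
  then show "\<exists>j<k. Y j \<in> L"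
  proof (induction k arbitrary: X0)
    case 0
    with assms(2) show ?case by simp
  next
    case (Suc k)
    then have "X0 \<subseteq> (\<Union>j<k. Y j) \<union> Y k" by (simp add: lessThan_Suc Un_commute)
    with Suc.prems(1) have "(\<Union>j<k. Y j) \<in> L \<or> Y k \<in> L" by (rule split)
    with Suc.IH show ?case using less_SucI by blast
  qed
qed

lemma U_C_subset: "(e, i) \<in> C \<Longrightarrow> U_C X C \<subseteq> U (X i) e"
  unfolding U_C_def by blast

lemma U_C_mem_Un:
  assumes "scott_set S" "coded_by S X M"
    and large: "largeness (U_C X C)" and minimal: "M_minimal S (U_C X C)"
    and "X0 \<in> U_C X C" "X0 \<subseteq> A \<union> B"
  shows "A \<in> U_C X C \<or> B \<in> U_C X C"
proof (rule ccontr)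
  let ?L = "U_C X C"
  assume "\<not> ?thesis"
  then obtain e0 i0 e1 i1 where C: "(e0, i0) \<in> C" "(e1, i1) \<in> C"
    and A: "A \<notin> U (X i0) e0" and B: "B \<notin> U (X i1) e1"
    unfolding U_C_def by blast
  have L0: "?L \<subseteq> U (X i0) e0" and L1: "?L \<subseteq> U (X i1) e1"
    using U_C_subset[OF C(1)] U_C_subset[OF C(2)] .
  define Z where "Z = join (X i0) (X i1)"
  have "Z \<in> S"
    using assms(1,2) unfolding Z_def scott_set_def coded_by_def by blast
  define W where "W = U Z (split_prog e0 e1)"
  have W: "W = split_class (U (X i0) e0) (U (X i1) e1)"
    unfolding W_def Z_def using UNIV_mem_largeness[OF large] L0 L1 by (intro U_split_prog) blast+
  have "X0 \<notin> W"
    unfolding W using not_mem_split_class upclosed_U A B assms(6) by blast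
  have core_W: "split_core ?L \<subseteq> W"
  proof
    fix Y assume "Y \<in> split_core ?L"
    then have "T \<in> U (X i0) e0 \<or> Y - T \<in> U (X i1) e1" for T
      using L0 L1 unfolding split_core_def by blast
    then show "Y \<in> W" unfolding W by (intro mem_split_class upclosed_U finitary_U)
  qed
  have core_L: "split_core ?L \<subseteq> ?L"
    using split_core_subset empty_not_mem_M_minimal[OF \<open>Z \<in> S\<close> large minimal] .
  have "upclosed (?L \<inter> W)"
    using upclosed_largeness[OF large] upclosed_U[of Z "split_prog e0 e1"]
    unfolding W_def upclosed_def by blast
  with core_W core_L have "largeness (?L \<inter> W)"
    by (intro largeness_mono[OF largeness_split_core[OF large]]) auto
  with minimal \<open>Z \<in> S\<close> have "?L \<subseteq> W"
    unfolding M_minimal_def W_def by blast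
  with \<open>X0 \<in> ?L\<close> \<open>X0 \<notin> W\<close> show False by blast
qed

theorem corollary2p13:
  fixes S :: "nat set set" and X :: "nat \<Rightarrow> nat set" and M :: "nat set"
    and C :: "(recf \<times> nat) set"
  assumes "scott_set S"
    and "coded_by S X M"
    and "largeness (U_C X C)"
    and "M_minimal S (U_C X C)"
  shows "partition_regular (U_C X C)"
proof (rule partition_regularI)
  have "X 0 \<in> S" using assms(2) unfolding coded_by_def by blast
  then show "{} \<notin> U_C X C" using empty_not_mem_M_minimal assms(3,4) by blast
  show "A \<in> U_C X C \<or> B \<in> U_C X C" if "X0 \<in> U_C X C" "X0 \<subseteq> A \<union> B" for X0 A B
    using U_C_mem_Un[OF assms that] .
qed (rule assms(3))

end
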